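(* Let $L\subset\mathbb{N}^2$ be a simple planar distributive lattice of rank $d+1$, and let $\lambda$ be the edge-labeling described in the context. Then $\lambda$ is an EL-labeling of $L$.
   Context: $\mathbb{N}^2$ is ordered componentwise. A planar distributive lattice is a finite sublattice $L$ of $\mathbb{N}^2$ with $(0,0)\in L$ such that for any $(i,j)\le(k,\ell)$ in $L$ there is a chain in $L$ from $(i,j)$ to $(k,\ell)$ in which the coordinate sum increases by exactly $1$ at each step; so every covering in $L$ is a horizontal or vertical unit step. $L$ is simple if it has no cut edge (a pair $(a,b)$, $\operatorname{rank} b=\operatorname{rank} a+1$, with $a$ the unique element of its rank and $b$ the unique element of its rank). Let $\mathfrak{c}_0: x_0<\dots<x_{d+1}$, $x_t=(i_t,j_t)$, be the maximal chain with $x_0=(0,0)$, $x_{d+1}=\max L$, such that for every $(k,\ell)\in L$ with $k=i_t$ for some $t$, $\ell\le j_t$. Labeling $\lambda$: the edge $x_t\to x_{t+1}$ gets label $t+1$; if $i_{t+1}=i_t+1$ then all edges $(i_t,j)\to(i_{t+1},j)$ of $L$ get label $t+1$; if $j_{t+1}=j_t+1$ then all edges $(i,j_t)\to(i,j_{t+1})$ of $L$ get label $t+1$. A chain $z_0\to\dots\to z_k$ (each $z_{s+1}$ covering $z_s$) is labeled by $(\lambda(z_0\to z_1),\dots,\lambda(z_{k-1}\to z_k))$, compared lexicographically. An edge-labeling is an EL-labeling if for every interval $[x,y]$ of $L$: (i) there is a unique maximal chain $x=z_0\to\dots\to z_k=y$ of $[x,y]$ with weakly increasing labels, and (ii) every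 other maximal chain of $[x,y]$ has label tuple lexicographically strictly larger than that chain's. *)

theory Defs
  imports Main
begin

type_synonym pt = "nat \<times> nat"

definition le2 :: "pt \<Rightarrow> pt \<Rightarrow> bool" where
  "le2 a b \<longleftrightarrow> fst a \<le> fst b \<and> snd a \<le> snd b"

definition lt2 :: "pt \<Rightarrow> pt \<Rightarrow> bool" where
  "lt2 a b \<longleftrightarrow> le2 a b \<and> a \<noteq> b"

definition rk :: "pt \<Rightarrow> nat" where
  "rk a = fst a + snd a"

definition planar_distributive_lattice :: "pt set \<Rightarrow> bool" where
  "planar_distributive_lattice L \<longleftrightarrow>
     finite L \<and> (0,0) \<in> L \<and>
     (\<forall>a\<in>L. \<forall>b\<in>L. (min (fst a) (fst b), min (snd a) (snd b)) \<in> L) \<and>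
     (\<forall>a\<in>L. \<forall>b\<in>L. (max (fst a) (fst b), max (snd a) (snd b)) \<in> L) \<and>
     (\<forall>a\<in>L. \<forall>b\<in>L. le2 a b \<longrightarrow>
        (\<exists>zs. zs \<noteq> [] \<and> hd zs = a \<and> last zs = b \<and> set zs \<subseteq> L \<and>
              (\<forall>s. Suc s < length zs \<longrightarrow>
                   le2 (zs ! s) (zs ! Suc s) \<and> rk (zs ! Suc s) = rk (zs ! s) + 1)))"

text \<open>Maximum of L (exists since L is finite and closed under joins).\<close>
definition topL :: "pt set \<Rightarrow> pt" where
  "topL L = (Max (fst ` L), Max (snd ` L))"

text \<open>Simple: no cut edge.\<close>
definition simple_pdl :: "pt set \<Rightarrow> bool" where
  "simple_pdl L \<longleftrightarrow>
     \<not> (\<exists>a\<in>L. \<exists>b\<in>L. rk b = rk a + 1 \<and>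
            (\<forall>c\<in>L. rk c = rk a \<longrightarrow> c = a) \<and>
            (\<forall>c\<in>L. rk c = rk b \<longrightarrow> c = b))"

definition covers :: "pt set \<Rightarrow> pt \<Rightarrow> pt \<Rightarrow> bool" where
  "covers L a b \<longleftrightarrow> a \<in> L \<and> b \<in> L \<and> lt2 a b \<and> \<not> (\<exists>c\<in>L. lt2 a c \<and> lt2 c b)"

definition max_chain :: "pt set \<Rightarrow> pt \<Rightarrow> pt \<Rightarrow> pt list \<Rightarrow> bool" where
  "max_chain L u v zs \<longleftrightarrow> zs \<noteq> [] \<and> hd zs = u \<and> last zs = v \<and>
     (\<forall>s. Suc s < length zs \<longrightarrow> covers L (zs ! s) (zs ! Suc s))"

definition chain_labels :: "(pt \<Rightarrow> pt \<Rightarrow> nat) \<Rightarrow> pt list \<Rightarrow> nat list" where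
  "chain_labels lab zs = map (\<lambda>(a, b). lab a b) (zip zs (tl zs))"

definition lex_less :: "nat list \<Rightarrow> nat list \<Rightarrow> bool" where
  "lex_less l1 l2 \<longleftrightarrow> (l1, l2) \<in> lexord {(a, b). a < b}"

definition EL_labeling :: "pt set \<Rightarrow> (pt \<Rightarrow> pt \<Rightarrow> nat) \<Rightarrow> bool" where
  "EL_labeling L lab \<longleftrightarrow>
     (\<forall>u\<in>L. \<forall>v\<in>L. le2 u v \<longrightarrow>
        (\<exists>!zs. max_chain L u v zs \<and> sorted (chain_labels lab zs)) \<and>
        (\<forall>zs zs'. max_chain L u v zs \<and> sorted (chain_labels lab zs) \<and>
                  max_chain L u v zs' \<and> zs' \<noteq> zs \<longrightarrow>
                  lex_less (chain_labels lab zs) (chain_labels lab zs')))"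

definition is_c0 :: "pt set \<Rightarrow> nat \<Rightarrow> (nat \<Rightarrow> pt) \<Rightarrow> bool" where
  "is_c0 L d x \<longleftrightarrow>
     x 0 = (0, 0) \<and> x (d + 1) = topL L \<and>
     (\<forall>t\<le>d. covers L (x t) (x (Suc t))) \<and>
     (\<forall>k l. (k, l) \<in> L \<longrightarrow> (\<exists>t\<le>d+1. fst (x t) = k) \<longrightarrow>
            (\<exists>t\<le>d+1. fst (x t) = k \<and> l \<le> snd (x t)))"

text \<open>The labeling lambda induced by c_0: a horizontal edge (i,j)->(i+1,j) gets label t+1
  where x_t -> x_{t+1} is the horizontal step of c_0 from column i; a vertical edge
  (i,j)->(i,j+1) gets label t+1 where x_t -> x_{t+1} is the vertical step of c_0 from row j.\<close>
definition c0_label :: "nat \<Rightarrow> (nat \<Rightarrow> pt) \<Rightarrow> pt \<Rightarrow> pt \<Rightarrow> nat" where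
  "c0_label d x a b =
     (if fst b = Suc (fst a) then
        Suc (LEAST t. t \<le> d \<and> fst (x t) = fst a \<and> fst (x (Suc t)) = Suc (fst (x t)))
      else
        Suc (LEAST t. t \<le> d \<and> snd (x t) = snd a \<and> snd (x (Suc t)) = Suc (snd (x t))))"

end

theory Submission
  imports Defs
begin

text \<open>Every cover of \<open>L\<close> is a unit step to the right or up.  The label of a right step
  leaving column \<open>i\<close> is one more than the time at which \<open>c\<^sub>0\<close> leaves column \<open>i\<close>, and
  similarly for up steps and rows; since \<open>c\<^sub>0\<close> is monotone and makes exactly one kind of
  step at each time, column labels increase with the column, row labels increase with the row,
  and no column label equals a row label.  Hence along every maximal chain of \<open>[u, v]\<close> the
  labels are distinct and form the same set: the labels of the columns \<open>fst u ..< fst v\<close> and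
  of the rows \<open>snd u ..< snd v\<close>.  A chain is determined by its label sequence, and among the
  arrangements of a fixed set of distinct labels the increasing one is lexicographically least,
  so it suffices to build an increasing chain.  From \<open>u\<close> take the step with the smaller of
  the two candidate labels: if it is the right step, then \<open>c\<^sub>0\<close> left column \<open>fst u\<close> at a
  point weakly below \<open>u\<close>, and the join of that point with \<open>u\<close> is the right neighbour of \<open>u\<close>,
  which therefore lies in \<open>L\<close>.\<close>

lemma le2_refl [simp]: "le2 a a"
  by (simp add: le2_def)

lemma le2_trans: "le2 a b \<Longrightarrow> le2 b c \<Longrightarrow> le2 a c"
  unfolding le2_def by auto

lemma le2_stepwise:
  assumes "\<And>s. Suc s < n \<Longrightarrow> le2 (f s) (f (Suc s))" "i \<le> k" "k < n"
  shows "le2 (f i) (f k)"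
  using assms(2,3) by (induction k rule: dec_induct) (auto intro: le2_trans assms(1))

definition step_right :: "pt \<Rightarrow> pt" where
  "step_right a = (Suc (fst a), snd a)"

definition step_up :: "pt \<Rightarrow> pt" where
  "step_up a = (fst a, Suc (snd a))"

lemma le2_step_right_iff: "le2 (step_right a) b \<longleftrightarrow> le2 a b \<and> fst a < fst b"
  unfolding le2_def step_right_def by auto

lemma le2_step_up_iff: "le2 (step_up a) b \<longleftrightarrow> le2 a b \<and> snd a < snd b"
  unfolding le2_def step_up_def by auto

lemma rk_step_right [simp]: "rk (step_right a) = Suc (rk a)"
  and rk_step_up [simp]: "rk (step_up a) = Suc (rk a)"
  unfolding rk_def step_right_def step_up_def by simp_all

lemma step_right_neq_step_up [simp]: "step_right a \<noteq> step_up a" "step_up a \<noteq> step_right a"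
  unfolding step_right_def step_up_def by (auto simp: prod_eq_iff)

subsection \<open>Crossing times of a sequence with unit increments\<close>

lemma unit_increment_crossing:
  fixes g :: "nat \<Rightarrow> nat"
  assumes "g 0 \<le> i" "i < g (Suc d)" "\<forall>t\<le>d. g (Suc t) \<le> Suc (g t)"
  shows "\<exists>t\<le>d. g t = i \<and> g (Suc t) = Suc i"
  using assms
proof (induction d)
  case 0 then show ?case by force
next
  case (Suc d)
  show ?case
  proof (cases "i < g (Suc d)")
    case True
    with Suc obtain t where "t \<le> d" "g t = i \<and> g (Suc t) = Suc i" by auto
    then show ?thesis by (intro exI[of _ t]) auto
  next
    case False
    moreover have "g (Suc (Suc d)) \<le> Suc (g (Suc d))" using Suc.prems(3) by auto
    ultimately have "g (Suc d) = i" "g (Suc (Suc d)) = Suc i"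
      using Suc.prems(2) by linarith+
    then show ?thesis by (intro exI[of _ "Suc d"]) auto
  qed
qed

definition first_crossing :: "(nat \<Rightarrow> nat) \<Rightarrow> nat \<Rightarrow> nat \<Rightarrow> nat" where
  "first_crossing g d i = (LEAST t. t \<le> d \<and> g t = i \<and> g (Suc t) = Suc (g t))"

lemma first_crossing_crosses:
  fixes g :: "nat \<Rightarrow> nat"
  assumes "g 0 \<le> i" "i < g (Suc d)" "\<forall>t\<le>d. g (Suc t) \<le> Suc (g t)"
  shows "first_crossing g d i \<le> d \<and> g (first_crossing g d i) = i \<and>
         g (Suc (first_crossing g d i)) = Suc i"
proof -
  have "\<exists>t. t \<le> d \<and> g t = i \<and> g (Suc t) = Suc (g t)"
    using unit_increment_crossing[OF assms] by auto
  from LeastI_ex[OF this] show ?thesis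
    unfolding first_crossing_def by simp
qed

lemma first_crossing_strict_mono:
  fixes g :: "nat \<Rightarrow> nat"
  assumes steps: "\<forall>t\<le>d. g (Suc t) \<le> Suc (g t)"
    and mono: "\<And>t t'. t \<le> t' \<Longrightarrow> t' \<le> Suc d \<Longrightarrow> g t \<le> g t'"
    and "g 0 \<le> i" "i < i'" "i' < g (Suc d)"
  shows "first_crossing g d i < first_crossing g d i'"
proof (rule ccontr)
  assume "\<not> ?thesis"
  moreover have "first_crossing g d i \<le> d" "g (first_crossing g d i) = i"
    and "g (first_crossing g d i') = i'"
    using first_crossing_crosses[OF _ _ steps] assms(3-5) by auto
  ultimately have "i' \<le> i" using mono[of "first_crossing g d i'" "first_crossing g d i"] by simp
  with \<open>i < i'\<close> show False by simp
qed

lemma max_chain_singleton [simp]: "max_chain L u v [a] \<longleftrightarrow> a = u \<and> v = u"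
  unfolding max_chain_def by auto

lemma max_chain_Cons_Cons:
  "max_chain L u v (a # b # r) \<longleftrightarrow> a = u \<and> covers L u b \<and> max_chain L b v (b # r)"
  unfolding max_chain_def by (auto simp: All_less_Suc2)

lemma chain_labels_singleton [simp]: "chain_labels f [a] = []"
  unfolding chain_labels_def by simp

lemma chain_labels_Cons_Cons [simp]:
  "chain_labels f (a # b # r) = f a b # chain_labels f (b # r)"
  unfolding chain_labels_def by simp

lemma sorted_lexord_less:
  fixes l1 l2 :: "'a::linorder list"
  assumes "sorted l1" "distinct l1" "distinct l2" "set l1 = set l2" "l1 \<noteq> l2"
  shows "(l1, l2) \<in> lexord {(a, b). a < b}"
  using assms
proof (induction l1 arbitrary: l2)
  case Nil then show ?case by simp
next
  case (Cons a r)
  then obtain b r2 where l2: "l2 = b # r2" by (cases l2) auto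
  show ?case
  proof (cases "a = b")
    case True
    then have "set r = set r2" using Cons.prems l2 by auto
    then show ?thesis using Cons l2 True by auto
  next
    case False
    then have "b \<in> set r" using Cons.prems l2 by (metis list.set_intros(1) set_ConsD)
    then show ?thesis using Cons.prems False l2 by auto
  qed
qed

subsection \<open>Covers in a planar distributive lattice\<close>

lemma exists_unit_step_below:
  assumes pdl: "planar_distributive_lattice L"
    and "u \<in> L" "v \<in> L" "le2 u v" "u \<noteq> v"
  shows "\<exists>w\<in>L. (w = step_right u \<or> w = step_up u) \<and> le2 w v"
proof -
  obtain zs where zs: "zs \<noteq> []" "hd zs = u" "last zs = v" "set zs \<subseteq> L"
    "\<forall>s. Suc s < length zs \<longrightarrow> le2 (zs ! s) (zs ! Suc s) \<and> rk (zs ! Suc s) = rk (zs ! s) + 1"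
    using pdl assms unfolding planar_distributive_lattice_def by blast
  have "length zs \<noteq> 1"
    using zs(1-3) \<open>u \<noteq> v\<close> by (cases zs) auto
  then have len: "1 < length zs" using zs(1) by (cases zs) auto
  have u: "zs ! 0 = u" and v: "zs ! (length zs - 1) = v"
    using zs(1-3) by (simp_all add: hd_conv_nth last_conv_nth)
  have "zs ! 1 \<in> L" using zs(4) len by auto
  moreover have "le2 u (zs ! 1)" "rk (zs ! 1) = rk u + 1"
    using zs(5)[rule_format, of 0] len u by auto
  then have "zs ! 1 = step_right u \<or> zs ! 1 = step_up u"
    unfolding le2_def rk_def step_right_def step_up_def by (cases u, cases "zs ! 1") auto
  moreover have "le2 (zs ! 1) v"
    using le2_stepwise[of "length zs" "(!) zs" 1 "length zs - 1"] zs(5) len v by auto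
  ultimately show ?thesis by blast
qed

lemma covers_unit_step:
  assumes pdl: "planar_distributive_lattice L" and "covers L a b"
  shows "b = step_right a \<or> b = step_up a"
proof -
  have ab: "a \<in> L" "b \<in> L" "lt2 a b" and no_between: "\<not> (\<exists>c\<in>L. lt2 a c \<and> lt2 c b)"
    using assms(2) unfolding covers_def by auto
  obtain w where w: "w \<in> L" "w = step_right a \<or> w = step_up a" "le2 w b"
    using exists_unit_step_below[OF pdl] ab unfolding lt2_def by blast
  have "lt2 a w" using w(2)
    unfolding lt2_def le2_def step_right_def step_up_def by (auto simp: prod_eq_iff)
  then have "w = b" using no_between w ab(2) unfolding lt2_def by blast
  with w show ?thesis by simp
qed

lemma unit_step_covers:
  assumes "a \<in> L" "b \<in> L" "b = step_right a \<or> b = step_up a"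
  shows "covers L a b"
proof -
  have "lt2 a b" "rk b = Suc (rk a)" using assms(3)
    unfolding lt2_def le2_def step_right_def step_up_def rk_def by (auto simp: prod_eq_iff)
  moreover have "rk a < rk c" "rk c < rk b" if "lt2 a c" "lt2 c b" for c
    using that unfolding lt2_def le2_def rk_def by (auto simp: prod_eq_iff)
  ultimately show ?thesis using assms(1,2) unfolding covers_def by fastforce
qed

lemma max_chain_le2: "max_chain L u v zs \<Longrightarrow> le2 u v"
proof (induction zs arbitrary: u)
  case Nil then show ?case by (simp add: max_chain_def)
next
  case (Cons a zs)
  then show ?case
    by (cases zs) (auto simp: max_chain_Cons_Cons covers_def lt2_def intro: le2_trans)
qed

subsection \<open>The labels induced by the chain \<open>c\<^sub>0\<close>\<close>

locale c0_chain =
  fixes L :: "pt set" and d :: nat and x :: "nat \<Rightarrow> pt"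
  assumes pdl: "planar_distributive_lattice L"
    and c0: "is_c0 L d x"
begin

definition col_label :: "nat \<Rightarrow> nat" where
  "col_label i = Suc (first_crossing (\<lambda>t. fst (x t)) d i)"

definition row_label :: "nat \<Rightarrow> nat" where
  "row_label j = Suc (first_crossing (\<lambda>t. snd (x t)) d j)"

lemma c0_label_eq:
  "c0_label d x a b = (if fst b = Suc (fst a) then col_label (fst a) else row_label (snd a))"
  unfolding c0_label_def col_label_def row_label_def first_crossing_def by simp

lemma c0_label_step_right [simp]: "c0_label d x a (step_right a) = col_label (fst a)"
  and c0_label_step_up [simp]: "c0_label d x a (step_up a) = row_label (snd a)"
  by (simp_all add: c0_label_eq step_right_def step_up_def)

lemma x_covers: "t \<le> d \<Longrightarrow> covers L (x t) (x (Suc t))"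
  using c0 unfolding is_c0_def by auto

lemma x_mem: "t \<le> Suc d \<Longrightarrow> x t \<in> L"
  using x_covers[of t] x_covers[of "t - 1"] unfolding covers_def
  by (cases t) (auto simp: le_Suc_eq)

lemma x_unit_step: "t \<le> d \<Longrightarrow> x (Suc t) = step_right (x t) \<or> x (Suc t) = step_up (x t)"
  using covers_unit_step[OF pdl x_covers] by blast

lemma x_le2_Suc: "t \<le> d \<Longrightarrow> le2 (x t) (x (Suc t))"
  using x_covers unfolding covers_def lt2_def by blast

lemma x_mono: "t \<le> t' \<Longrightarrow> t' \<le> Suc d \<Longrightarrow> le2 (x t) (x t')"
  by (rule le2_stepwise[where n = "Suc (Suc d)"]) (auto intro: x_le2_Suc)

lemma le2_top: "v \<in> L \<Longrightarrow> le2 v (x (Suc d))"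
  using c0 pdl unfolding is_c0_def topL_def le2_def planar_distributive_lattice_def by simp

lemma x_zero: "x 0 = (0, 0)"
  using c0 unfolding is_c0_def by simp

lemma x_unit_increments:
  "\<forall>t\<le>d. fst (x (Suc t)) \<le> Suc (fst (x t))" "\<forall>t\<le>d. snd (x (Suc t)) \<le> Suc (snd (x t))"
  using x_unit_step by (fastforce simp: step_right_def step_up_def)+

lemma col_crossing:
  assumes "i < fst (x (Suc d))"
  obtains t where "t \<le> d" "col_label i = Suc t" "fst (x t) = i" "x (Suc t) = step_right (x t)"
proof -
  define t where "t = first_crossing (\<lambda>t. fst (x t)) d i"
  have t: "t \<le> d" "fst (x t) = i" "fst (x (Suc t)) = Suc i"
    using first_crossing_crosses[of "\<lambda>t. fst (x t)" i d] assms x_zero x_unit_increments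
    unfolding t_def by auto
  then have "x (Suc t) = step_right (x t)"
    using x_unit_step[of t] by (auto simp: step_up_def)
  with t show ?thesis
    using that unfolding col_label_def t_def by blast
qed

lemma row_crossing:
  assumes "j < snd (x (Suc d))"
  obtains t where "t \<le> d" "row_label j = Suc t" "snd (x t) = j" "x (Suc t) = step_up (x t)"
proof -
  define t where "t = first_crossing (\<lambda>t. snd (x t)) d j"
  have t: "t \<le> d" "snd (x t) = j" "snd (x (Suc t)) = Suc j"
    using first_crossing_crosses[of "\<lambda>t. snd (x t)" j d] assms x_zero x_unit_increments
    unfolding t_def by auto
  then have "x (Suc t) = step_up (x t)"
    using x_unit_step[of t] by (auto simp: step_right_def)
  with t show ?thesis
    using that unfolding row_label_def t_def by blast
qed

lemma col_label_strict_mono: "i < i' \<Longrightarrow> i' < fst (x (Suc d)) \<Longrightarrow> col_label i < col_label i'"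
  unfolding col_label_def
  using first_crossing_strict_mono[OF x_unit_increments(1)] x_mono x_zero
  by (auto simp: le2_def)

lemma row_label_strict_mono: "j < j' \<Longrightarrow> j' < snd (x (Suc d)) \<Longrightarrow> row_label j < row_label j'"
  unfolding row_label_def
  using first_crossing_strict_mono[OF x_unit_increments(2)] x_mono x_zero
  by (auto simp: le2_def)

lemma col_label_neq_row_label:
  assumes "i < fst (x (Suc d))" "j < snd (x (Suc d))"
  shows "col_label i \<noteq> row_label j"
proof
  assume "col_label i = row_label j"
  moreover obtain t where "col_label i = Suc t" "x (Suc t) = step_right (x t)"
    using col_crossing[OF assms(1)] by blast
  moreover obtain s where "row_label j = Suc s" "x (Suc s) = step_up (x s)"
    using row_crossing[OF assms(2)] by blast
  ultimately show False by simp
qed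

lemma join_mem: "a \<in> L \<Longrightarrow> b \<in> L \<Longrightarrow> (max (fst a) (fst b), max (snd a) (snd b)) \<in> L"
  using pdl unfolding planar_distributive_lattice_def by blast

lemma step_right_mem:
  assumes "u \<in> L" "fst u < fst (x (Suc d))" "snd u < snd (x (Suc d))"
    and "col_label (fst u) < row_label (snd u)"
  shows "step_right u \<in> L"
proof -
  obtain t where t: "t \<le> d" "col_label (fst u) = Suc t" "fst (x t) = fst u"
    "x (Suc t) = step_right (x t)"
    using col_crossing[OF assms(2)] by blast
  obtain s where s: "s \<le> d" "row_label (snd u) = Suc s" "snd (x s) = snd u"
    using row_crossing[OF assms(3)] by blast
  have "snd (x (Suc t)) \<le> snd u"
    using x_mono[of "Suc t" s] assms(4) t s by (simp add: le2_def)
  then show ?thesis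
    using join_mem[OF assms(1) x_mem[of "Suc t"]] t by (simp add: step_right_def max_def)
qed

lemma step_up_mem:
  assumes "u \<in> L" "fst u < fst (x (Suc d))" "snd u < snd (x (Suc d))"
    and "row_label (snd u) < col_label (fst u)"
  shows "step_up u \<in> L"
proof -
  obtain t where t: "t \<le> d" "row_label (snd u) = Suc t" "snd (x t) = snd u"
    "x (Suc t) = step_up (x t)"
    using row_crossing[OF assms(3)] by blast
  obtain s where s: "s \<le> d" "col_label (fst u) = Suc s" "fst (x s) = fst u"
    using col_crossing[OF assms(2)] by blast
  have "fst (x (Suc t)) \<le> fst u"
    using x_mono[of "Suc t" s] assms(4) t s by (simp add: le2_def)
  then show ?thesis
    using join_mem[OF assms(1) x_mem[of "Suc t"]] t by (simp add: step_up_def max_def)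
qed

definition interval_labels :: "pt \<Rightarrow> pt \<Rightarrow> nat set" where
  "interval_labels u v = col_label ` {fst u..<fst v} \<union> row_label ` {snd u..<snd v}"

lemma interval_labels_step_right:
  assumes "fst u < fst v" "le2 v (x (Suc d))"
  shows "interval_labels u v = insert (col_label (fst u)) (interval_labels (step_right u) v)"
    and "col_label (fst u) \<notin> interval_labels (step_right u) v"
proof -
  have "{fst u..<fst v} = insert (fst u) {Suc (fst u)..<fst v}" using assms(1) by auto
  then show "interval_labels u v = insert (col_label (fst u)) (interval_labels (step_right u) v)"
    unfolding interval_labels_def step_right_def by auto
  show "col_label (fst u) \<notin> interval_labels (step_right u) v"
  proof
    assume "col_label (fst u) \<in> interval_labels (step_right u) v"
    then consider i where "fst u < i" "i < fst v" "col_label (fst u) = col_label i"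
      | j where "j < snd v" "col_label (fst u) = row_label j"
      unfolding interval_labels_def step_right_def by (auto simp: Suc_le_eq)
    then show False
    proof cases
      case (1 i)
      then show False using col_label_strict_mono[of "fst u" i] assms(2) by (auto simp: le2_def)
    next
      case (2 j)
      then show False using col_label_neq_row_label[of "fst u" j] assms by (auto simp: le2_def)
    qed
  qed
qed

lemma interval_labels_step_up:
  assumes "snd u < snd v" "le2 v (x (Suc d))"
  shows "interval_labels u v = insert (row_label (snd u)) (interval_labels (step_up u) v)"
    and "row_label (snd u) \<notin> interval_labels (step_up u) v"
proof -
  have "{snd u..<snd v} = insert (snd u) {Suc (snd u)..<snd v}" using assms(1) by auto
  then show "interval_labels u v = insert (row_label (snd u)) (interval_labels (step_up u) v)"
    unfolding interval_labels_def step_up_def by auto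
  show "row_label (snd u) \<notin> interval_labels (step_up u) v"
  proof
    assume "row_label (snd u) \<in> interval_labels (step_up u) v"
    then consider i where "i < fst v" "row_label (snd u) = col_label i"
      | j where "snd u < j" "j < snd v" "row_label (snd u) = row_label j"
      unfolding interval_labels_def step_up_def by (auto simp: Suc_le_eq)
    then show False
    proof cases
      case (1 i)
      then show False using col_label_neq_row_label[of i "snd u"] assms by (auto simp: le2_def)
    next
      case (2 j)
      then show False using row_label_strict_mono[of "snd u" j] assms(2) by (auto simp: le2_def)
    qed
  qed
qed

lemma interval_labels_lower_bound:
  assumes "l \<in> interval_labels u v" "le2 v (x (Suc d))"
  shows "(fst u < fst v \<and> col_label (fst u) \<le> l) \<or> (snd u < snd v \<and> row_label (snd u) \<le> l)"
  using assms col_label_strict_mono[of "fst u"] row_label_strict_mono[of "snd u"]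
  unfolding interval_labels_def le2_def by (fastforce simp: le_less)

abbreviation labels :: "pt list \<Rightarrow> nat list" where
  "labels \<equiv> chain_labels (c0_label d x)"

lemma max_chain_labels:
  assumes "max_chain L u v zs" "v \<in> L"
  shows "distinct (labels zs) \<and> set (labels zs) = interval_labels u v"
  using assms(1)
proof (induction zs arbitrary: u)
  case Nil then show ?case by (simp add: max_chain_def)
next
  case (Cons a zs)
  show ?case
  proof (cases zs)
    case Nil then show ?thesis using Cons.prems by (simp add: interval_labels_def)
  next
    case (Cons b r)
    then have cov: "covers L u b" and chain: "max_chain L b v zs" and "a = u"
      using Cons.prems by (auto simp: max_chain_Cons_Cons)
    then have IH: "distinct (labels zs) \<and> set (labels zs) = interval_labels b v"
      and labels: "labels (a # zs) = c0_label d x u b # labels zs"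
      using Cons.IH Cons by auto
    have bv: "le2 b v" and top: "le2 v (x (Suc d))"
      using max_chain_le2[OF chain] le2_top[OF assms(2)] .
    from covers_unit_step[OF pdl cov] show ?thesis
    proof
      assume b: "b = step_right u"
      with bv have "fst u < fst v" by (simp add: le2_step_right_iff)
      with IH labels b show ?thesis using interval_labels_step_right[OF _ top] by simp
    next
      assume b: "b = step_up u"
      with bv have "snd u < snd v" by (simp add: le2_step_up_iff)
      with IH labels b show ?thesis using interval_labels_step_up[OF _ top] by simp
    qed
  qed
qed

lemma covers_label_inj:
  assumes "covers L u b" "covers L u b'" "c0_label d x u b = c0_label d x u b'"
  shows "b = b'"
proof -
  have "col_label (fst u) \<noteq> row_label (snd u)" if "step_right u \<in> L" "step_up u \<in> L"
    using col_label_neq_row_label le2_top[OF that(1)] le2_top[OF that(2)]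
    by (simp add: le2_step_right_iff le2_step_up_iff)
  moreover have "b \<in> L" "b' \<in> L" using assms(1,2) unfolding covers_def by auto
  ultimately show ?thesis
    using covers_unit_step[OF pdl assms(1)] covers_unit_step[OF pdl assms(2)] assms(3) by auto
qed

lemma max_chain_labels_inj:
  "max_chain L u v zs \<Longrightarrow> max_chain L u v zs' \<Longrightarrow> labels zs = labels zs' \<Longrightarrow> zs = zs'"
proof (induction zs arbitrary: u zs')
  case Nil then show ?case by (simp add: max_chain_def)
next
  case (Cons a zs)
  obtain a' zs2 where zs': "zs' = a' # zs2"
    using Cons.prems by (cases zs') (auto simp: max_chain_def)
  show ?case
  proof (cases zs)
    case Nil
    with Cons.prems zs' show ?thesis by (cases zs2) (auto simp: max_chain_Cons_Cons)
  next
    case (Cons b r)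
    with Cons.prems zs' obtain b' r' where zs2: "zs2 = b' # r'"
      by (cases zs2) auto
    from Cons.prems zs' zs2 \<open>zs = b # r\<close>
    have "covers L u b" "covers L u b'" "c0_label d x u b = c0_label d x u b'"
      and "max_chain L b v zs" "max_chain L b' v zs2" "labels zs = labels zs2" "a = u" "a' = u"
      by (auto simp: max_chain_Cons_Cons)
    with covers_label_inj Cons.IH zs' show ?thesis by metis
  qed
qed

lemma interval_labels_antimono: "le2 u w \<Longrightarrow> interval_labels w v \<subseteq> interval_labels u v"
  unfolding interval_labels_def le2_def by auto

lemma min_label_step:
  assumes "u \<in> L" "v \<in> L" "le2 u v" "u \<noteq> v"
  obtains w where "covers L u w" "le2 w v" "\<forall>l\<in>interval_labels u v. c0_label d x u w \<le> l"
proof -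
  have top: "le2 v (x (Suc d))" using le2_top[OF assms(2)] .
  note bound = interval_labels_lower_bound[OF _ top, of _ u]
  consider "fst u < fst v" "snd u < snd v" | "fst u = fst v" | "snd u = snd v"
    using assms(3) by (force simp: le2_def)
  then show ?thesis
  proof cases
    case 1
    with top have in_box: "fst u < fst (x (Suc d))" "snd u < snd (x (Suc d))"
      by (auto simp: le2_def)
    show ?thesis
    proof (cases "col_label (fst u) < row_label (snd u)")
      case True
      then have "\<forall>l\<in>interval_labels u v. col_label (fst u) \<le> l" using bound by force
      with step_right_mem[OF assms(1) in_box True] unit_step_covers[OF assms(1)] 1 assms(3)
      show ?thesis by (intro that[of "step_right u"]) (auto simp: le2_step_right_iff)
    next
      case False
      then have less: "row_label (snd u) < col_label (fst u)"
        using col_label_neq_row_label[OF in_box] by simp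
      then have "\<forall>l\<in>interval_labels u v. row_label (snd u) \<le> l" using bound by force
      with step_up_mem[OF assms(1) in_box less] unit_step_covers[OF assms(1)] 1 assms(3)
      show ?thesis by (intro that[of "step_up u"]) (auto simp: le2_step_up_iff)
    qed
  next
    case 2
    with exists_unit_step_below[OF pdl assms] have "step_up u \<in> L" "le2 (step_up u) v"
      by (auto simp: le2_step_right_iff)
    with unit_step_covers[OF assms(1)] 2 bound show ?thesis
      by (intro that[of "step_up u"]) auto
  next
    case 3
    with exists_unit_step_below[OF pdl assms] have "step_right u \<in> L" "le2 (step_right u) v"
      by (auto simp: le2_step_up_iff)
    with unit_step_covers[OF assms(1)] 3 bound show ?thesis
      by (intro that[of "step_right u"]) auto
  qed
qed

lemma exists_sorted_max_chain:
  assumes "u \<in> L" "v \<in> L" "le2 u v"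
  shows "\<exists>zs. max_chain L u v zs \<and> sorted (labels zs)"
  using assms
proof (induction "rk v - rk u" arbitrary: u)
  case 0
  then have "u = v" unfolding le2_def rk_def by (simp add: prod_eq_iff)
  then show ?case by (intro exI[of _ "[u]"]) simp
next
  case (Suc n)
  then have "u \<noteq> v" by auto
  with Suc.prems obtain w where w: "covers L u w" "le2 w v"
    and min: "\<forall>l\<in>interval_labels u v. c0_label d x u w \<le> l"
    by (rule min_label_step)
  have "w \<in> L" "le2 u w" "rk w = Suc (rk u)"
    using w(1) covers_unit_step[OF pdl w(1)] unfolding covers_def lt2_def by auto
  with Suc w obtain zs where zs: "max_chain L w v zs" "sorted (labels zs)"
    by (metis Suc_diff_Suc diff_Suc_1 zero_less_Suc zero_less_diff)
  then obtain r where r: "zs = w # r" by (cases zs) (auto simp: max_chain_def)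
  have "set (labels zs) \<subseteq> interval_labels u v"
    using max_chain_labels[OF zs(1) Suc.prems(2)] interval_labels_antimono[OF \<open>le2 u w\<close>] by blast
  with zs r w min have "max_chain L u v (u # zs) \<and> sorted (labels (u # zs))"
    by (auto simp: max_chain_Cons_Cons)
  then show ?case by blast
qed

lemma EL_labeling_c0_label: "EL_labeling L (c0_label d x)"
  unfolding EL_labeling_def
proof (intro ballI impI conjI allI)
  fix u v assume "u \<in> L" "v \<in> L" "le2 u v"
  then obtain zs where zs: "max_chain L u v zs" "sorted (labels zs)"
    using exists_sorted_max_chain by blast
  show "\<exists>!zs. max_chain L u v zs \<and> sorted (labels zs)"
  proof (rule ex1I[of _ zs])
    fix zs' assume zs': "max_chain L u v zs' \<and> sorted (labels zs')"
    then have "labels zs' = labels zs"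
      using max_chain_labels[OF zs(1) \<open>v \<in> L\<close>] max_chain_labels[of u v zs'] zs(2) \<open>v \<in> L\<close>
      by (metis sorted_distinct_set_unique)
    with zs' zs(1) show "zs' = zs" using max_chain_labels_inj by blast
  qed (use zs in blast)
next
  fix u v zs zs' assume "v \<in> L"
    and chains: "max_chain L u v zs \<and> sorted (labels zs) \<and> max_chain L u v zs' \<and> zs' \<noteq> zs"
  then have "labels zs \<noteq> labels zs'" using max_chain_labels_inj by metis
  with chains show "lex_less (labels zs) (labels zs')"
    unfolding lex_less_def
    using sorted_lexord_less max_chain_labels[of u v zs] max_chain_labels[of u v zs'] \<open>v \<in> L\<close>
    by metis
qed

end

theorem proposition6:
  fixes L :: "pt set" and d :: nat and x :: "nat \<Rightarrow> pt"
  assumes "planar_distributive_lattice L"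
    and "simple_pdl L"
    and "rk (topL L) = d + 1"
    and "is_c0 L d x"
  shows "EL_labeling L (c0_label d x)"
proof -
  interpret c0_chain L d x using assms(1,4) by unfold_locales
  show ?thesis by (rule EL_labeling_c0_label)
qed

end
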